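(* Let $(\mathcal{M},d)$ be an NPC space, $\alpha\in[1,2]$, $P\in\mathcal{P}_\alpha(\mathcal{M})$, and let $x^*$ be a minimizer of $F_\alpha$ (assumed to exist). For $x\in\mathcal{M}\setminus\{x^*\}$, if $b_\alpha(x)>0$ then $$ d(x,x^* )^\alpha\le\frac1{b_\alpha(x)}\int_{\mathcal{M}}\left(d(x,y)^\alpha-d(x^*,y)^\alpha\right)dP(y). $$ Consequently, if $B_\alpha:=\inf_{x\in\mathcal{M}\setminus\{x^*\}}b_\alpha(x)>0$, then for all $x\in\mathcal{M}$, $d(x,x^* )^\alpha\le B_\alpha^{-1}\int(d(x,y)^\alpha-d(x^*,y)^\alpha)\,dP(y)$.
   Context: NPC space: a Polish space $(\mathcal{M},d)$ such that for any $x_0,x_1$ there is $y$ with $d(z,y)^2\le\frac12d(z,x_0)^2+\frac12d(z,x_1)^2-\frac14d(x_0,x_1)^2$ for all $z$; such spaces are uniquely geodesic (geodesic: $\gamma:[0,1]\to\mathcal{M}$ with $d(\gamma_s,\gamma_t)=|s-t|d(\gamma_0,\gamma_1)$). $\mathcal{P}_\alpha(\mathcal{M})$ is the set of Borel probability measures $P$ with $\int d(x,y)^\alpha dP(y)<\infty$ for some $x$. $F_\alpha(x)=\int d(x,y)^\alpha dP(y)$. For $x\ne x^*$, $\gamma^x$ is the geodesic with $\gamma^x_0=x^*$, $\gamma^x_1=x$, and $$ b_\alpha(x)=\sup_{t\in(0,1]}\frac{F_\alpha(\gamma^x_t)-\{t^{\alpha/2}+(1-t)^{\alpha/2}\}F_\alpha(x^*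 )}{t^{\alpha/2}d(x,x^* )^\alpha}. $$ *)

theory Defs
  imports "HOL-Probability.Probability"
begin

text \<open>NPC space condition (the ambient Polish space is a type of class polish_space).\<close>
definition NPC :: "('a::metric_space) itself \<Rightarrow> bool" where
  "NPC _ \<longleftrightarrow> (\<forall>x0 x1::'a. \<exists>y. \<forall>z.
      (dist z y)^2 \<le> (1/2) * (dist z x0)^2 + (1/2) * (dist z x1)^2 - (1/4) * (dist x0 x1)^2)"

definition geodesic :: "(real \<Rightarrow> 'a::metric_space) \<Rightarrow> bool" where
  "geodesic \<gamma> \<longleftrightarrow> (\<forall>s\<in>{0..1}. \<forall>t\<in>{0..1}.
      dist (\<gamma> s) (\<gamma> t) = \<bar>s - t\<bar> * dist (\<gamma> 0) (\<gamma> 1))"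

definition geod_from :: "'a::metric_space \<Rightarrow> 'a \<Rightarrow> real \<Rightarrow> 'a" where
  "geod_from xs x = (THE \<gamma>. geodesic \<gamma> \<and> \<gamma> 0 = xs \<and> \<gamma> 1 = x \<and>
                         (\<forall>t. t \<notin> {0..1} \<longrightarrow> \<gamma> t = undefined))"

definition P_alpha :: "real \<Rightarrow> ('a::metric_space) measure \<Rightarrow> bool" where
  "P_alpha \<alpha> P \<longleftrightarrow> (\<exists>x. integrable P (\<lambda>y. dist x y powr \<alpha>))"

definition F_alpha :: "real \<Rightarrow> ('a::metric_space) measure \<Rightarrow> 'a \<Rightarrow> real" where
  "F_alpha \<alpha> P x = (\<integral>y. dist x y powr \<alpha> \<partial>P)"

definition b_alpha :: "real \<Rightarrow> ('a::metric_space) measure \<Rightarrow> 'a \<Rightarrow> 'a \<Rightarrow> real" where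
  "b_alpha \<alpha> P xs x = (SUP t\<in>{0<..1}.
     (F_alpha \<alpha> P (geod_from xs x t) - (t powr (\<alpha>/2) + (1 - t) powr (\<alpha>/2)) * F_alpha \<alpha> P xs)
     / (t powr (\<alpha>/2) * dist x xs powr \<alpha>))"

end

theory Submission
  imports Defs
begin

text \<open>In an NPC space the point g(t) of the geodesic from x0 to x1 satisfies the comparison
  inequality d(z,g(t))^2 \<le> (1-t) d(z,x0)^2 + t d(z,x1)^2 - t(1-t) d(x0,x1)^2 for every z.
  Dropping the last term and using that s \<mapsto> s^(\<alpha>/2) is subadditive for \<alpha> \<le> 2 gives
  F(g(t)) \<le> (1-t)^(\<alpha>/2) F(x0) + t^(\<alpha>/2) F(x1). For x0 = x* this says that the quotient
  whose supremum defines b(x) never exceeds its value at t = 1, so b(x) = (F(x) - F(x*)) / d(x,x*)^\<alpha>,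
  from which both inequalities follow. The geodesic points themselves are obtained from the NPC
  axiom by iterated midpoints at dyadic parameters and completeness.\<close>

text \<open>The NPC axiom asserts the existence of such a point for t = 1/2.\<close>
definition npc_point :: "'a::metric_space \<Rightarrow> 'a \<Rightarrow> real \<Rightarrow> 'a \<Rightarrow> bool" where
  "npc_point x0 x1 t p \<longleftrightarrow> (\<forall>z. (dist z p)^2 \<le>
     (1-t) * (dist z x0)^2 + t * (dist z x1)^2 - t * (1-t) * (dist x0 x1)^2)"

lemma npc_point_dist:
  assumes "npc_point x0 x1 t p" "0 \<le> t" "t \<le> 1"
  shows "dist x0 p = t * dist x0 x1" "dist p x1 = (1-t) * dist x0 x1"
proof -
  let ?D = "dist x0 x1"
  have "(dist x0 p)^2 \<le> (1-t) * 0 + t * ?D^2 - t * (1-t) * ?D^2"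
    using assms(1) unfolding npc_point_def by (metis dist_self power_zero_numeral)
  also have "\<dots> = (t * ?D)^2" by (simp add: power2_eq_square algebra_simps)
  finally have le0: "dist x0 p \<le> t * ?D"
    by (rule power2_le_imp_le) (use assms in auto)
  have "(dist x1 p)^2 \<le> (1-t) * ?D^2 + t * 0 - t * (1-t) * ?D^2"
    using assms(1) unfolding npc_point_def by (metis dist_commute dist_self power_zero_numeral)
  also have "\<dots> = ((1-t) * ?D)^2" by (simp add: power2_eq_square algebra_simps)
  finally have le1: "dist x1 p \<le> (1-t) * ?D"
    by (rule power2_le_imp_le) (use assms in auto)
  have "?D \<le> dist x0 p + dist p x1" by (rule dist_triangle)
  with le0 le1 show "dist x0 p = t * ?D" "dist p x1 = (1-t) * ?D"
    by (auto simp: dist_commute algebra_simps)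
qed

lemma npc_point_dist_le:
  assumes "npc_point x0 x1 s p" "npc_point x0 x1 u q" "0 \<le> s" "s \<le> 1" "0 \<le> u" "u \<le> 1"
  shows "dist p q \<le> \<bar>s - u\<bar> * dist x0 x1"
proof -
  let ?D = "dist x0 x1"
  have q: "dist q x0 = u * ?D" "dist q x1 = (1-u) * ?D"
    using npc_point_dist[OF assms(2,5,6)] by (auto simp: dist_commute)
  have "(dist q p)^2 \<le> (1-s) * (dist q x0)^2 + s * (dist q x1)^2 - s * (1-s) * ?D^2"
    using assms(1) unfolding npc_point_def by blast
  also have "\<dots> = (\<bar>s - u\<bar> * ?D)^2"
    unfolding q by (simp add: power2_eq_square algebra_simps)
  finally have "dist q p \<le> \<bar>s - u\<bar> * ?D" by (rule power2_le_imp_le) simp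
  then show ?thesis by (simp add: dist_commute)
qed

lemma npc_point_midpoint:
  assumes npc: "NPC TYPE('a::metric_space)"
    and pa: "npc_point x0 x1 a pa" and pb: "npc_point x0 x1 b (pb::'a)"
    and "0 \<le> a" "a \<le> b" "b \<le> 1"
  shows "\<exists>m. npc_point x0 x1 ((a+b)/2) m"
proof -
  let ?D = "dist x0 x1"
  obtain m where m: "\<And>z. (dist z m)^2 \<le>
      (1/2) * (dist z pa)^2 + (1/2) * (dist z pb)^2 - (1/4) * (dist pa pb)^2"
    using npc unfolding NPC_def by blast
  have "dist x0 pb \<le> dist x0 pa + dist pa pb" by (rule dist_triangle)
  then have "(b-a) * ?D \<le> dist pa pb"
    using npc_point_dist(1)[OF pa] npc_point_dist(1)[OF pb] assms by (simp add: algebra_simps)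
  then have sep: "((b-a) * ?D)^2 \<le> (dist pa pb)^2"
    using assms by (intro power_mono) auto
  have "npc_point x0 x1 ((a+b)/2) m"
    unfolding npc_point_def
  proof
    fix z
    have "(dist z m)^2 \<le> (1/2) * (dist z pa)^2 + (1/2) * (dist z pb)^2 - (1/4) * (dist pa pb)^2"
      by (rule m)
    also have "\<dots> \<le> (1/2) * ((1-a) * (dist z x0)^2 + a * (dist z x1)^2 - a * (1-a) * ?D^2)
       + (1/2) * ((1-b) * (dist z x0)^2 + b * (dist z x1)^2 - b * (1-b) * ?D^2)
       - (1/4) * ((b-a) * ?D)^2"
      using pa pb sep unfolding npc_point_def by (intro diff_mono add_mono mult_left_mono) auto
    also have "\<dots> = (1 - (a+b)/2) * (dist z x0)^2 + (a+b)/2 * (dist z x1)^2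
        - (a+b)/2 * (1 - (a+b)/2) * ?D^2"
      by (simp add: power2_eq_square field_simps)
    finally show "(dist z m)^2 \<le> \<dots>" .
  qed
  then show ?thesis ..
qed

lemma npc_point_dyadic:
  assumes npc: "NPC TYPE('a::metric_space)" and "k \<le> 2^n"
  shows "\<exists>p::'a. npc_point x0 x1 (real k / 2^n) p"
  using assms(2)
proof (induction n arbitrary: k)
  case 0
  then have "k = 0 \<or> k = 1" by auto
  then show ?case
  proof
    assume "k = 0"
    then show ?thesis by (intro exI[of _ x0]) (simp add: npc_point_def)
  next
    assume "k = 1"
    then show ?thesis by (intro exI[of _ x1]) (simp add: npc_point_def dist_commute)
  qed
next
  case (Suc n)
  define j where "j = k div 2"
  have "k = 2*j \<or> k = 2*j + 1" unfolding j_def by presburger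
  then show ?case
  proof
    assume k: "k = 2*j"
    then have "real k / 2^Suc n = real j / 2^n" by simp
    moreover have "j \<le> 2^n" using Suc.prems k by simp
    ultimately show ?thesis using Suc.IH[of j] by simp
  next
    assume k: "k = 2*j + 1"
    then have j: "j + 1 \<le> 2^n" using Suc.prems by simp
    obtain p q where p: "npc_point x0 x1 (real j / 2^n) p"
      and q: "npc_point x0 x1 (real (j+1) / 2^n) q"
      using Suc.IH[of j] Suc.IH[of "j+1"] j by auto
    have "\<exists>m. npc_point x0 x1 ((real j / 2^n + real (j+1) / 2^n) / 2) m"
    proof (rule npc_point_midpoint[OF npc p q])
      have "real (j+1) \<le> 2^n" using j by (metis of_nat_le_iff of_nat_numeral of_nat_power)
      then show "real (j+1) / 2^n \<le> 1" by simp
    qed (simp_all add: divide_right_mono)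
    moreover have "(real j / 2^n + real (j+1) / 2^n) / 2 = real k / 2^Suc n"
      using k by (simp add: field_simps)
    ultimately show ?thesis by (simp only:)
  qed
qed

lemma npc_point_limit:
  fixes p :: "nat \<Rightarrow> 'a::complete_space"
  assumes p: "\<And>n. npc_point x0 x1 (a n) (p n)" and a: "\<And>n. a n \<in> {0..1}"
    and lim: "a \<longlonglongrightarrow> t"
  shows "\<exists>q. npc_point x0 x1 t q"
proof -
  let ?D = "dist x0 x1"
  have "Cauchy p"
  proof (rule metric_CauchyI)
    fix e :: real assume "e > 0"
    then have "e / (?D + 1) > 0" by (simp add: add_nonneg_pos)
    then obtain M where M: "\<forall>m\<ge>M. \<forall>n\<ge>M. dist (a m) (a n) < e / (?D + 1)"
      using LIMSEQ_imp_Cauchy[OF lim] unfolding Cauchy_def by blast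
    have "dist (p m) (p n) < e" if "m \<ge> M" "n \<ge> M" for m n
    proof -
      have "dist (p m) (p n) \<le> \<bar>a m - a n\<bar> * ?D"
        using npc_point_dist_le[OF p p] a by auto
      also have "\<dots> \<le> e / (?D + 1) * ?D"
        using M that by (intro mult_right_mono) (auto simp: dist_real_def intro: less_imp_le)
      also have "\<dots> < e"
        using \<open>e > 0\<close> add_pos_nonneg[OF zero_less_one zero_le_dist[of x0 x1]]
        by (simp add: field_simps)
      finally show ?thesis .
    qed
    then show "\<exists>M. \<forall>m\<ge>M. \<forall>n\<ge>M. dist (p m) (p n) < e" by blast
  qed
  then obtain q where q: "p \<longlonglongrightarrow> q" using Cauchy_convergent_iff convergent_def by blast
  have "npc_point x0 x1 t q"
    unfolding npc_point_def
  proof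
    fix z
    show "(dist z q)^2 \<le> (1-t) * (dist z x0)^2 + t * (dist z x1)^2 - t * (1-t) * ?D^2"
    proof (rule LIMSEQ_le)
      show "(\<lambda>n. (dist z (p n))^2) \<longlonglongrightarrow> (dist z q)^2"
        by (intro tendsto_intros q)
      show "(\<lambda>n. (1 - a n) * (dist z x0)^2 + a n * (dist z x1)^2 - a n * (1 - a n) * ?D^2)
          \<longlonglongrightarrow> (1-t) * (dist z x0)^2 + t * (dist z x1)^2 - t * (1-t) * ?D^2"
        by (intro tendsto_intros lim)
      show "\<exists>N. \<forall>n\<ge>N. (dist z (p n))^2
          \<le> (1 - a n) * (dist z x0)^2 + a n * (dist z x1)^2 - a n * (1 - a n) * ?D^2"
        using p unfolding npc_point_def by blast
    qed
  qed
  then show ?thesis ..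
qed

lemma dyadic_approximation:
  fixes t :: real
  assumes "0 \<le> t" "t \<le> 1"
  obtains k :: "nat \<Rightarrow> nat" where "\<And>n. k n \<le> 2^n" "(\<lambda>n. real (k n) / 2^n) \<longlonglongrightarrow> t"
proof
  define k where "k n = nat \<lfloor>2^n * t\<rfloor>" for n :: nat
  have k: "real (k n) = of_int \<lfloor>2^n * t\<rfloor>" for n
    unfolding k_def using assms by simp
  show "k n \<le> 2^n" for n
  proof -
    have "real (k n) \<le> 2^n * t" unfolding k by (rule of_int_floor_le)
    also have "\<dots> \<le> 2^n" using assms by (simp add: mult_left_le)
    finally have "real (k n) \<le> 2^n" .
    then show ?thesis by (metis of_nat_le_iff of_nat_numeral of_nat_power)
  qed
  have lower: "t - 1/2^n \<le> real (k n) / 2^n" and upper: "real (k n) / 2^n \<le> t" for n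
  proof -
    have "2^n * t - 1 \<le> real (k n)" "real (k n) \<le> 2^n * t"
      unfolding k by linarith+
    then show "t - 1/2^n \<le> real (k n) / 2^n" "real (k n) / 2^n \<le> t"
      by (simp_all add: le_divide_eq divide_le_eq algebra_simps)
  qed
  have "(\<lambda>n. t - 1/2^n) \<longlonglongrightarrow> t - 0"
    by (intro tendsto_diff tendsto_const LIMSEQ_divide_realpow_zero) simp
  then have lim: "(\<lambda>n. t - 1/2^n) \<longlonglongrightarrow> t" by simp
  show "(\<lambda>n. real (k n) / 2^n) \<longlonglongrightarrow> t"
    by (rule tendsto_sandwich[OF always_eventually always_eventually lim tendsto_const])
      (simp_all add: lower upper)
qed

lemma npc_point_exists:
  assumes npc: "NPC TYPE('a::complete_space)" and "0 \<le> t" "t \<le> 1"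
  shows "\<exists>p::'a. npc_point x0 x1 t p"
proof -
  obtain k where k: "\<And>n. k n \<le> 2^n" and lim: "(\<lambda>n. real (k n) / 2^n) \<longlonglongrightarrow> t"
    using dyadic_approximation assms(2,3) by blast
  obtain p :: "nat \<Rightarrow> 'a" where "\<And>n. npc_point x0 x1 (real (k n) / 2^n) (p n)"
    using npc_point_dyadic[OF npc k] by metis
  moreover have "real (k n) / 2^n \<in> {0..1}" for n
    using k[of n] by (simp add: divide_le_eq_1)
  ultimately show ?thesis using lim by (rule npc_point_limit)
qed

lemma NPC_point_between_unique:
  assumes npc: "NPC TYPE('a::metric_space)" and t: "0 \<le> t" "t \<le> 1"
    and p: "dist x0 p = t * dist x0 x1" "dist p x1 = (1-t) * dist x0 (x1::'a)"
    and q: "dist x0 q = t * dist x0 x1" "dist q x1 = (1-t) * dist x0 x1"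
  shows "p = q"
proof (rule ccontr)
  txt \<open>The NPC midpoint of two distinct such points would be strictly closer to both x0 and x1.\<close>
  assume "p \<noteq> q"
  then have sep: "(dist p q)^2 > 0" by simp
  let ?D = "dist x0 x1"
  obtain m where m: "\<And>z. (dist z m)^2 \<le>
      (1/2) * (dist z p)^2 + (1/2) * (dist z q)^2 - (1/4) * (dist p q)^2"
    using npc unfolding NPC_def by blast
  have "(dist x0 m)^2 \<le> (t * ?D)^2 - (dist p q)^2 / 4"
    using m[of x0] p q by simp
  with sep have "(dist x0 m)^2 < (t * ?D)^2" by linarith
  then have m0: "dist x0 m < t * ?D" by (rule power_less_imp_less_base) (use t in simp)
  have "(dist x1 m)^2 \<le> ((1-t) * ?D)^2 - (dist p q)^2 / 4"
    using m[of x1] p q by (simp add: dist_commute)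
  with sep have "(dist x1 m)^2 < ((1-t) * ?D)^2" by linarith
  then have m1: "dist x1 m < (1-t) * ?D" by (rule power_less_imp_less_base) (use t in simp)
  have "?D \<le> dist x0 m + dist m x1" by (rule dist_triangle)
  with m0 m1 show False by (simp add: dist_commute algebra_simps)
qed

lemma geodesic_npc_points:
  assumes G: "\<And>t. t \<in> {0..1} \<Longrightarrow> npc_point x0 x1 t (G t)"
  shows "geodesic G" "G 0 = x0" "G 1 = x1"
proof -
  let ?D = "dist x0 x1"
  have dist_G: "dist x0 (G t) = t * ?D" "dist (G t) x1 = (1-t) * ?D" if "t \<in> {0..1}" for t
    using npc_point_dist[OF G[OF that]] that by auto
  show G0: "G 0 = x0" and G1: "G 1 = x1"
    using dist_G[of 0] dist_G[of 1] by simp_all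
  show "geodesic G"
    unfolding geodesic_def G0 G1
  proof (intro ballI)
    fix s t :: real assume s: "s \<in> {0..1}" and t: "t \<in> {0..1}"
    have le: "dist (G s) (G t) \<le> \<bar>s - t\<bar> * ?D"
      using npc_point_dist_le[OF G[OF s] G[OF t]] s t by auto
    have "dist x0 (G t) \<le> dist x0 (G s) + dist (G s) (G t)"
      "dist x0 (G s) \<le> dist x0 (G t) + dist (G s) (G t)"
      by (metis dist_commute dist_triangle)+
    then have "\<bar>s - t\<bar> * ?D \<le> dist (G s) (G t)"
      using dist_G[OF s] dist_G[OF t] by (auto simp: abs_if algebra_simps)
    with le show "dist (G s) (G t) = \<bar>s - t\<bar> * ?D" by linarith
  qed
qed

lemma NPC_geodesic_unique:
  assumes npc: "NPC TYPE('a::metric_space)"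
    and \<gamma>: "geodesic \<gamma>" and \<delta>: "geodesic \<delta>"
    and ends: "\<gamma> 0 = \<delta> 0" "\<gamma> 1 = (\<delta> 1 :: 'a)" and t: "t \<in> {0..1}"
  shows "\<gamma> t = \<delta> t"
proof -
  let ?D = "dist (\<gamma> 0) (\<gamma> 1)"
  have g: "dist (\<gamma> s) (\<gamma> u) = \<bar>s - u\<bar> * ?D" and d: "dist (\<delta> s) (\<delta> u) = \<bar>s - u\<bar> * ?D"
    if "s \<in> {0..1}" "u \<in> {0..1}" for s u
    using \<gamma> \<delta> that unfolding geodesic_def ends by blast+
  show ?thesis
  proof (rule NPC_point_between_unique[OF npc])
    show "dist (\<gamma> 0) (\<gamma> t) = t * ?D" "dist (\<gamma> t) (\<gamma> 1) = (1-t) * ?D"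
      using g[of 0 t] g[of t 1] t by simp_all
    show "dist (\<gamma> 0) (\<delta> t) = t * ?D" "dist (\<delta> t) (\<gamma> 1) = (1-t) * ?D"
      using d[of 0 t] d[of t 1] t unfolding ends by simp_all
  qed (use t in simp_all)
qed

lemma geod_from_npc_point:
  assumes npc: "NPC TYPE('a::complete_space)" and t: "t \<in> {0..1}"
  shows "npc_point x0 (x1::'a) t (geod_from x0 x1 t)"
proof -
  define G where "G s = (if s \<in> {0..1} then SOME p. npc_point x0 x1 s p else undefined)" for s
  have G: "npc_point x0 x1 s (G s)" if "s \<in> {0..1}" for s
    using that someI_ex[OF npc_point_exists[OF npc]] unfolding G_def by auto
  have G_outside: "G s = undefined" if "s \<notin> {0..1}" for s
    using that unfolding G_def by auto
  have "geod_from x0 x1 = G"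
    unfolding geod_from_def
  proof (rule the_equality)
    show "geodesic G \<and> G 0 = x0 \<and> G 1 = x1 \<and> (\<forall>t. t \<notin> {0..1} \<longrightarrow> G t = undefined)"
      using geodesic_npc_points[OF G] G_outside by blast
    fix \<gamma> assume "geodesic \<gamma> \<and> \<gamma> 0 = x0 \<and> \<gamma> 1 = x1 \<and> (\<forall>t. t \<notin> {0..1} \<longrightarrow> \<gamma> t = undefined)"
    then show "\<gamma> = G"
      using NPC_geodesic_unique[OF npc _ geodesic_npc_points(1)[OF G]] geodesic_npc_points(2,3)[OF G]
      by (auto simp: G_def fun_eq_iff)
  qed
  with G t show ?thesis by simp
qed

lemma powr_add_le_add_powr:
  fixes a b p :: real
  assumes "0 \<le> a" "0 \<le> b" "0 < p" "p \<le> 1"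
  shows "(a + b) powr p \<le> a powr p + b powr p"
proof (cases "a + b = 0")
  case True
  with assms show ?thesis by simp
next
  case False
  let ?s = "a + b"
  have s: "?s > 0" using False assms by simp
  have "a/?s \<le> (a/?s) powr p" "b/?s \<le> (b/?s) powr p"
    using powr_mono'[of p 1 "a/?s"] powr_mono'[of p 1 "b/?s"] assms s by simp_all
  moreover have "a/?s + b/?s = 1" using s by (simp flip: add_divide_distrib)
  ultimately have "?s powr p * 1 \<le> ?s powr p * ((a/?s) powr p + (b/?s) powr p)"
    by (intro mult_left_mono) auto
  also have "\<dots> = a powr p + b powr p"
    using s by (simp add: powr_divide distrib_left)
  finally show ?thesis by simp
qed

lemma power2_powr_half:
  fixes d \<alpha> :: real
  assumes "0 \<le> d"
  shows "(d^2) powr (\<alpha>/2) = d powr \<alpha>"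
proof (cases "d = 0")
  case False
  with assms have "(d^2) powr (\<alpha>/2) = (d powr 2) powr (\<alpha>/2)" by (simp add: powr_numeral)
  also have "\<dots> = d powr \<alpha>" by (simp add: powr_powr)
  finally show ?thesis .
qed simp

lemma powr_le_convex_combination:
  fixes a b c t \<alpha> :: real
  assumes "0 \<le> a" "0 \<le> b" "0 \<le> c" "0 \<le> t" "t \<le> 1" "0 < \<alpha>" "\<alpha> \<le> 2"
    and "c^2 \<le> (1-t) * a^2 + t * b^2"
  shows "c powr \<alpha> \<le> (1-t) powr (\<alpha>/2) * a powr \<alpha> + t powr (\<alpha>/2) * b powr \<alpha>"
proof -
  have "c powr \<alpha> = (c^2) powr (\<alpha>/2)" using assms by (simp add: power2_powr_half)
  also have "\<dots> \<le> ((1-t) * a^2 + t * b^2) powr (\<alpha>/2)"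
    using assms by (intro powr_mono2) auto
  also have "\<dots> \<le> ((1-t) * a^2) powr (\<alpha>/2) + (t * b^2) powr (\<alpha>/2)"
    using assms by (intro powr_add_le_add_powr) auto
  also have "\<dots> = (1-t) powr (\<alpha>/2) * a powr \<alpha> + t powr (\<alpha>/2) * b powr \<alpha>"
    using assms by (simp add: powr_mult power2_powr_half)
  finally show ?thesis .
qed

lemma powr_add_le_two_powr:
  fixes a b \<alpha> :: real
  assumes "0 \<le> a" "0 \<le> b" "0 \<le> \<alpha>"
  shows "(a + b) powr \<alpha> \<le> 2 powr \<alpha> * (a powr \<alpha> + b powr \<alpha>)"
proof -
  have "(a + b) powr \<alpha> \<le> (2 * max a b) powr \<alpha>" using assms by (intro powr_mono2) auto
  also have "\<dots> = 2 powr \<alpha> * max a b powr \<alpha>" using assms by (simp add: powr_mult)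
  also have "\<dots> \<le> 2 powr \<alpha> * (a powr \<alpha> + b powr \<alpha>)"
    by (intro mult_left_mono) (auto simp: max_def)
  finally show ?thesis .
qed

lemma integrable_dist_powr:
  fixes P :: "('a::metric_space) measure"
  assumes "finite_measure P" and borel: "sets P = sets borel"
    and Pa: "P_alpha \<alpha> P" and "0 \<le> \<alpha>"
  shows "integrable P (\<lambda>y. dist z y powr \<alpha>)"
proof -
  interpret finite_measure P by fact
  obtain x0 where x0: "integrable P (\<lambda>y. dist x0 y powr \<alpha>)"
    using Pa unfolding P_alpha_def by blast
  have "dist z \<in> borel_measurable borel"
    by (intro borel_measurable_continuous_onI continuous_intros)
  then have meas: "(\<lambda>y. dist z y powr \<alpha>) \<in> borel_measurable P"
    unfolding measurable_cong_sets[OF borel refl] by measurable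
  have major: "integrable P (\<lambda>y. 2 powr \<alpha> * (dist z x0 powr \<alpha> + dist x0 y powr \<alpha>))"
    using x0 by (intro integrable_mult_right integrable_add) auto
  have bound: "dist z y powr \<alpha> \<le> 2 powr \<alpha> * (dist z x0 powr \<alpha> + dist x0 y powr \<alpha>)" for y
  proof -
    have "dist z y powr \<alpha> \<le> (dist z x0 + dist x0 y) powr \<alpha>"
      using assms by (intro powr_mono2) (auto intro: dist_triangle)
    also have "\<dots> \<le> 2 powr \<alpha> * (dist z x0 powr \<alpha> + dist x0 y powr \<alpha>)"
      using assms by (intro powr_add_le_two_powr) auto
    finally show ?thesis .
  qed
  show ?thesis
  proof (rule Bochner_Integration.integrable_bound[OF major meas])
    show "AE y in P. norm (dist z y powr \<alpha>)
        \<le> norm (2 powr \<alpha> * (dist z x0 powr \<alpha> + dist x0 y powr \<alpha>))"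
      using bound by (intro AE_I2) (simp add: order_trans[OF _ abs_ge_self])
  qed
qed

lemma F_alpha_geod_from_le:
  fixes P :: "('a::complete_space) measure"
  assumes npc: "NPC TYPE('a)" and int: "\<And>z. integrable P (\<lambda>y. dist z y powr \<alpha>)"
    and "0 < \<alpha>" "\<alpha> \<le> 2" and t: "t \<in> {0..1}"
  shows "F_alpha \<alpha> P (geod_from x0 x1 t)
    \<le> (1-t) powr (\<alpha>/2) * F_alpha \<alpha> P x0 + t powr (\<alpha>/2) * F_alpha \<alpha> P x1"
proof -
  have "dist (geod_from x0 x1 t) y powr \<alpha>
      \<le> (1-t) powr (\<alpha>/2) * dist x0 y powr \<alpha> + t powr (\<alpha>/2) * dist x1 y powr \<alpha>" for y
  proof (rule powr_le_convex_combination)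
    have "(dist y (geod_from x0 x1 t))^2 \<le> (1-t) * (dist y x0)^2 + t * (dist y x1)^2
        - t * (1-t) * (dist x0 x1)^2"
      using geod_from_npc_point[OF npc t] unfolding npc_point_def by blast
    moreover have "0 \<le> t * (1-t) * (dist x0 x1)^2" using t by simp
    ultimately show "(dist (geod_from x0 x1 t) y)^2 \<le> (1-t) * (dist x0 y)^2 + t * (dist x1 y)^2"
      by (simp add: dist_commute)
  qed (use assms in auto)
  then have "F_alpha \<alpha> P (geod_from x0 x1 t)
      \<le> (\<integral>y. (1-t) powr (\<alpha>/2) * dist x0 y powr \<alpha> + t powr (\<alpha>/2) * dist x1 y powr \<alpha> \<partial>P)"
    unfolding F_alpha_def
    by (intro integral_mono int Bochner_Integration.integrable_add integrable_mult_right)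
  also have "\<dots> = (1-t) powr (\<alpha>/2) * F_alpha \<alpha> P x0 + t powr (\<alpha>/2) * F_alpha \<alpha> P x1"
    unfolding F_alpha_def using int by simp
  finally show ?thesis .
qed

lemma b_alpha_eq_excess:
  fixes P :: "('a::complete_space) measure"
  assumes npc: "NPC TYPE('a)" and int: "\<And>z. integrable P (\<lambda>y. dist z y powr \<alpha>)"
    and "0 < \<alpha>" "\<alpha> \<le> 2" and "x \<noteq> xs"
  shows "b_alpha \<alpha> P xs x = (F_alpha \<alpha> P x - F_alpha \<alpha> P xs) / dist x xs powr \<alpha>"
proof -
  let ?F = "F_alpha \<alpha> P" and ?\<delta> = "dist x xs powr \<alpha>"
  let ?q = "\<lambda>t. (?F (geod_from xs x t) - (t powr (\<alpha>/2) + (1-t) powr (\<alpha>/2)) * ?F xs)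
    / (t powr (\<alpha>/2) * ?\<delta>)"
  have "geod_from xs x 1 = x"
    using npc_point_dist(2)[OF geod_from_npc_point[OF npc, of 1 xs x]] by simp
  then have q1: "?q 1 = (?F x - ?F xs) / ?\<delta>" by simp
  have "?q t \<le> (?F x - ?F xs) / ?\<delta>" if t: "t \<in> {0<..1}" for t
  proof -
    let ?c = "t powr (\<alpha>/2)"
    have "?F (geod_from xs x t) - (?c + (1-t) powr (\<alpha>/2)) * ?F xs \<le> ?c * (?F x - ?F xs)"
      using F_alpha_geod_from_le[OF npc int, of t xs x] assms t by (simp add: algebra_simps)
    then have "?q t \<le> ?c * (?F x - ?F xs) / (?c * ?\<delta>)"
      by (rule divide_right_mono) simp
    also have "\<dots> = (?F x - ?F xs) / ?\<delta>" using t by simp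
    finally show ?thesis .
  qed
  then have "Sup (?q ` {0<..1}) = (?F x - ?F xs) / ?\<delta>"
    using q1 by (intro cSup_eq_maximum) (auto intro!: image_eqI[of _ _ 1])
  then show ?thesis unfolding b_alpha_def .
qed

theorem proposition4p2:
  fixes P :: "('a::polish_space) measure" and \<alpha> :: real and xs :: 'a
  assumes npc: "NPC TYPE('a)"
    and alpha: "1 \<le> \<alpha>" "\<alpha> \<le> 2"
    and prob: "prob_space P" and borel: "sets P = sets borel"
    and Pa: "P_alpha \<alpha> P"
    and min: "\<forall>z. F_alpha \<alpha> P xs \<le> F_alpha \<alpha> P z"
  shows "(\<forall>x. x \<noteq> xs \<longrightarrow> b_alpha \<alpha> P xs x > 0 \<longrightarrow>
            dist x xs powr \<alpha> \<le> (1 / b_alpha \<alpha> P xs x) *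
              (\<integral>y. dist x y powr \<alpha> - dist xs y powr \<alpha> \<partial>P))
       \<and> ((INF x\<in>UNIV - {xs}. b_alpha \<alpha> P xs x) > 0 \<longrightarrow>
           (\<forall>x. dist x xs powr \<alpha> \<le> (1 / (INF x\<in>UNIV - {xs}. b_alpha \<alpha> P xs x)) *
              (\<integral>y. dist x y powr \<alpha> - dist xs y powr \<alpha> \<partial>P)))"
proof -
  let ?F = "F_alpha \<alpha> P" and ?b = "b_alpha \<alpha> P xs"
  have int: "integrable P (\<lambda>y. dist z y powr \<alpha>)" for z
    using integrable_dist_powr[OF prob_space.finite_measure[OF prob] borel Pa] alpha by simp
  have excess: "(\<integral>y. dist x y powr \<alpha> - dist xs y powr \<alpha> \<partial>P) = ?F x - ?F xs" for x
    unfolding F_alpha_def using int by simp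
  have b: "?b x = (?F x - ?F xs) / dist x xs powr \<alpha>" if "x \<noteq> xs" for x
    using b_alpha_eq_excess[OF npc int _ _ that] alpha by simp
  have bound: "dist x xs powr \<alpha> \<le> (1 / c) * (?F x - ?F xs)"
    if "x \<noteq> xs" "0 < c" "c \<le> ?b x" for x c
    using that b[OF that(1)] by (simp add: le_divide_eq divide_le_eq mult.commute)
  have "bdd_below (?b ` (UNIV - {xs}))"
    using b min by (intro bdd_belowI[of _ 0]) auto
  then have INF_le: "(INF x\<in>UNIV - {xs}. ?b x) \<le> ?b x" if "x \<noteq> xs" for x
    using that by (intro cINF_lower) auto
  show ?thesis
    unfolding excess
  proof (intro conjI allI impI)
    fix x assume "x \<noteq> xs" "0 < ?b x"
    then show "dist x xs powr \<alpha> \<le> (1 / ?b x) * (?F x - ?F xs)"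
      by (rule bound[OF _ _ order_refl])
  next
    fix x assume B: "0 < (INF x\<in>UNIV - {xs}. ?b x)"
    show "dist x xs powr \<alpha> \<le> (1 / (INF x\<in>UNIV - {xs}. ?b x)) * (?F x - ?F xs)"
      by (cases "x = xs") (use B INF_le bound in auto)
  qed
qed

end
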